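(* Let $g,\eta_p,\lambda>0$. Let $q_l,q_r$ be two states, $q=(h,hu,h\sigma_{xx},h\sigma_{zz})$ with $h>0$, $\sigma_{xx}>0$, $\sigma_{zz}>0$. Define $P_l=P(q_l)$, $P_r=P(q_r)$, $a_l=\sqrt{\partial_h P|_{\boldsymbol s}(h_l,\boldsymbol s_l)}$, $a_r=\sqrt{\partial_h P|_{\boldsymbol s}(h_r,\boldsymbol s_r)}$, and the relaxation speeds $$\frac{c_l}{h_l}=a_l+2\Big(\max(0,u_l-u_r)+\frac{\max(0,P_r-P_l)}{h_la_l+h_ra_r}\Big),\qquad \frac{c_r}{h_r}=a_r+2\Big(\max(0,u_l-u_r)+\frac{\max(0,P_l-P_r)}{h_la_l+h_ra_r}\Big).$$ With $\pi_l=P_l$, $\pi_r=P_r$, define the intermediate heights by $$\frac{1}{h_l^*}=\frac{1}{h_l}+\frac{c_r(u_r-u_l)+\pi_l-\pi_r}{c_l(c_l+c_r)},\qquad \frac{1}{h_r^*}=\frac{1}{h_r}+\frac{c_l(u_r-u_l)+\pi_r-\pi_l}{c_r(c_l+c_r)}.$$ Then $h_l^*$ and $h_r^*$ are well defined and positive (i.e. the right-hand sides above are positive), and $$\forall h\in[h_l,h_l^*]:\ h^2\,\partial_hP|_{\boldsymbol s}(h,\boldsymbol s_l)\le c_l^2,\qquad \forall h\in[h_r,h_r^*]:\ h^2\,\partial_hP|_{\boldsymbol s}(h,\boldsymbol s_r)\le c_r^2,$$ where $[a,b]$ denotes the closed interval between $a$ and $b$ whatever their order. Moreover, the finite volume scheme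 built on these speeds (described in the context) satisfies the discrete energy inequality: there is a numerical energy flux $\mathcal G(q_l,q_r)$ with $\mathcal G(q,q)=G(q)$ such that, under the CFL condition, $E(q_i^{n+1})-E(q_i^n)+\frac{\Delta t}{\Delta x_i}\big(\mathcal G(q_i^n,q_{i+1}^n)-\mathcal G(q_{i-1}^n,q_i^n)\big)\le 0$ for all $i$.
   Context: We consider the one-dimensional system (shallow viscoelastic flow without source terms) for $h\ge0$, velocity $u$, and $\sigma_{xx},\sigma_{zz}>0$: $\partial_t h+\partial_x(hu)=0$, $\partial_t(hu)+\partial_x(hu^2+P)=0$, $\partial_t(h\sigma_{xx})+\partial_x(h\sigma_{xx}u)-2h\sigma_{xx}\partial_xu=0$, $\partial_t(h\sigma_{zz})+\partial_x(h\sigma_{zz}u)+2h\sigma_{zz}\partial_xu=0$, with pressure $P=g\frac{h^2}{2}+\frac{\eta_p}{2\lambda}h(\sigma_{zz}-\sigma_{xx})$, constants $g,\eta_p,\lambda>0$. The (pseudo-conservative) state is $q=(h,hu,h\sigma_{xx},h\sigma_{zz})$. Set $\boldsymbol s=(s_{xx},s_{zz})=(\sigma_{xx}^{-1/2}/h,\ \sigma_{zz}^{1/2}/h)$; viewing $P$ as a function of $(h,\boldsymbol s)$, $P=g h^2/2+\frac{\eta_p}{2\lambda}(h^3s_{zz}^2-\frac{1}{hs_{xx}^2})$, and $\partial_hP|_{\boldsymbol s}=gh+\frac{\eta_p}{2\lambda}(3\sigma_{zz}+\sigma_{xx})$. Energy: $E(q)=h\frac{u^2}{2}+g\frac{h^2}{2}+\frac{\eta_p}{4\lambda}h(\sigma_{xx}+\sigma_{zz}-\ln(\sigma_{xx}\sigma_{zz})-2)$,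 energy flux $G(q)=(E+P)u$. Riemann solver: given $q_l,q_r$ and $c_l,c_r,h_l^*,h_r^*$ as in the claim, set $u^*=\frac{c_lu_l+c_ru_r+\pi_l-\pi_r}{c_l+c_r}$, $\pi^*=\frac{c_r\pi_l+c_l\pi_r-c_lc_r(u_r-u_l)}{c_l+c_r}$, $\sigma_{xx,l}^*=\sigma_{xx,l}(h_l/h_l^* )^2$, $\sigma_{xx,r}^*=\sigma_{xx,r}(h_r/h_r^* )^2$, $\sigma_{zz,l}^*=\sigma_{zz,l}(h_l^*/h_l)^2$, $\sigma_{zz,r}^*=\sigma_{zz,r}(h_r^*/h_r)^2$, $q_l^*=(h_l^*,h_l^*u^*,h_l^*\sigma_{xx,l}^*,h_l^*\sigma_{zz,l}^* )$, $q_r^*$ similarly, and speeds $\Sigma_1=u_l-c_l/h_l$, $\Sigma_2=u^*$, $\Sigma_3=u_r+c_r/h_r$. The self-similar approximate solution $R(\xi)$ equals $q_l$ (with $\pi=\pi_l$) for $\xi<\Sigma_1$, $q_l^*$ (with $\pi=\pi^*$) on $(\Sigma_1,\Sigma_2)$, $q_r^*$ (with $\pi=\pi^*$) on $(\Sigma_2,\Sigma_3)$, $q_r$ (with $\pi=\pi_r$) for $\xi>\Sigma_3$. Numerical fluxes: $\mathcal F_l=(\mathcal F^h,\mathcal F^{hu},\mathcal F_l^{h\sigma_{xx}},\mathcal F_l^{h\sigma_{zz}})$, $\mathcal F_r=(\mathcal F^h,\mathcal F^{hu},\mathcal F_r^{h\sigma_{xx}},\mathcal F_r^{h\sigma_{zz}})$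 where $\mathcal F^h=(hu)$ and $\mathcal F^{hu}=(hu^2+\pi)$ evaluated in $R$ at $\xi=0$, and, writing $w=h\sigma_{xx}$ (resp. $h\sigma_{zz}$), $\mathcal F_l^{w}=(wu)_l+\min(0,\Sigma_1)(w_l^*-w_l)+\min(0,\Sigma_2)(w_r^*-w_l^* )+\min(0,\Sigma_3)(w_r-w_r^* )$, $\mathcal F_r^{w}=(wu)_r-\max(0,\Sigma_1)(w_l^*-w_l)-\max(0,\Sigma_2)(w_r^*-w_l^* )-\max(0,\Sigma_3)(w_r-w_r^* )$. Scheme: cells $(x_{i-1/2},x_{i+1/2})$, $\Delta x_i=x_{i+1/2}-x_{i-1/2}$, time step $\Delta t$, $q_i^{n+1}=q_i^n-\frac{\Delta t}{\Delta x_i}(\mathcal F_l(q_i^n,q_{i+1}^n)-\mathcal F_r(q_{i-1}^n,q_i^n))$. CFL condition: $\Delta t\,A(q_i^n,q_{i+1}^n)\le\frac12\min(\Delta x_i,\Delta x_{i+1})$ for all $i$, with $A(q_l,q_r)=\max(|\Sigma_1|,|\Sigma_2|,|\Sigma_3|)$. *)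

theory Defs
  imports Complex_Main
begin

text \<open>Pseudo-conservative state q = (h, h u, h sigma_xx, h sigma_zz).\<close>
type_synonym state = "real \<times> real \<times> real \<times> real"

definition hh :: "state \<Rightarrow> real" where "hh q = fst q"
definition uu :: "state \<Rightarrow> real" where "uu q = fst (snd q) / fst q"
definition sig_xx :: "state \<Rightarrow> real" where "sig_xx q = fst (snd (snd q)) / fst q"
definition sig_zz :: "state \<Rightarrow> real" where "sig_zz q = snd (snd (snd q)) / fst q"

definition admissible :: "state \<Rightarrow> bool" where
  "admissible q \<longleftrightarrow> hh q > 0 \<and> sig_xx q > 0 \<and> sig_zz q > 0"

definition Pres :: "real \<Rightarrow> real \<Rightarrow> real \<Rightarrow> state \<Rightarrow> real" where
  "Pres g eta lam q = g * (hh q)^2 / 2 + eta / (2 * lam) * hh q * (sig_zz q - sig_xx q)"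

definition s_xx :: "state \<Rightarrow> real" where "s_xx q = 1 / (sqrt (sig_xx q) * hh q)"
definition s_zz :: "state \<Rightarrow> real" where "s_zz q = sqrt (sig_zz q) / hh q"

definition P_hs :: "real \<Rightarrow> real \<Rightarrow> real \<Rightarrow> real \<Rightarrow> real \<Rightarrow> real \<Rightarrow> real" where
  "P_hs g eta lam h sx sz = g * h^2 / 2 + eta / (2 * lam) * (h^3 * sz^2 - 1 / (h * sx^2))"

definition dPdh :: "real \<Rightarrow> real \<Rightarrow> real \<Rightarrow> real \<Rightarrow> real \<Rightarrow> real \<Rightarrow> real" where
  "dPdh g eta lam h sx sz = g * h + eta / (2 * lam) * (3 * h^2 * sz^2 + 1 / (h^2 * sx^2))"

definition a_of :: "real \<Rightarrow> real \<Rightarrow> real \<Rightarrow> state \<Rightarrow> real" where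
  "a_of g eta lam q = sqrt (dPdh g eta lam (hh q) (s_xx q) (s_zz q))"

definition c_l :: "real \<Rightarrow> real \<Rightarrow> real \<Rightarrow> state \<Rightarrow> state \<Rightarrow> real" where
  "c_l g eta lam ql qr = hh ql * (a_of g eta lam ql + 2 * (max 0 (uu ql - uu qr)
     + max 0 (Pres g eta lam qr - Pres g eta lam ql)
         / (hh ql * a_of g eta lam ql + hh qr * a_of g eta lam qr)))"

definition c_r :: "real \<Rightarrow> real \<Rightarrow> real \<Rightarrow> state \<Rightarrow> state \<Rightarrow> real" where
  "c_r g eta lam ql qr = hh qr * (a_of g eta lam qr + 2 * (max 0 (uu ql - uu qr)
     + max 0 (Pres g eta lam ql - Pres g eta lam qr)
         / (hh ql * a_of g eta lam ql + hh qr * a_of g eta lam qr)))"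

definition inv_hstar_l :: "real \<Rightarrow> real \<Rightarrow> real \<Rightarrow> state \<Rightarrow> state \<Rightarrow> real" where
  "inv_hstar_l g eta lam ql qr =
     (let cl = c_l g eta lam ql qr; cr = c_r g eta lam ql qr in
      1 / hh ql + (cr * (uu qr - uu ql) + Pres g eta lam ql - Pres g eta lam qr) / (cl * (cl + cr)))"

definition inv_hstar_r :: "real \<Rightarrow> real \<Rightarrow> real \<Rightarrow> state \<Rightarrow> state \<Rightarrow> real" where
  "inv_hstar_r g eta lam ql qr =
     (let cl = c_l g eta lam ql qr; cr = c_r g eta lam ql qr in
      1 / hh qr + (cl * (uu qr - uu ql) + Pres g eta lam qr - Pres g eta lam ql) / (cr * (cl + cr)))"

definition hstar_l :: "real \<Rightarrow> real \<Rightarrow> real \<Rightarrow> state \<Rightarrow> state \<Rightarrow> real" where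
  "hstar_l g eta lam ql qr = 1 / inv_hstar_l g eta lam ql qr"

definition hstar_r :: "real \<Rightarrow> real \<Rightarrow> real \<Rightarrow> state \<Rightarrow> state \<Rightarrow> real" where
  "hstar_r g eta lam ql qr = 1 / inv_hstar_r g eta lam ql qr"

definition between :: "real \<Rightarrow> real \<Rightarrow> real set" where
  "between a b = {min a b .. max a b}"

definition ustar :: "real \<Rightarrow> real \<Rightarrow> real \<Rightarrow> state \<Rightarrow> state \<Rightarrow> real" where
  "ustar g eta lam ql qr =
     (let cl = c_l g eta lam ql qr; cr = c_r g eta lam ql qr in
      (cl * uu ql + cr * uu qr + Pres g eta lam ql - Pres g eta lam qr) / (cl + cr))"

definition pistar :: "real \<Rightarrow> real \<Rightarrow> real \<Rightarrow> state \<Rightarrow> state \<Rightarrow> real" where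
  "pistar g eta lam ql qr =
     (let cl = c_l g eta lam ql qr; cr = c_r g eta lam ql qr in
      (cr * Pres g eta lam ql + cl * Pres g eta lam qr - cl * cr * (uu qr - uu ql)) / (cl + cr))"

definition qstar_l :: "real \<Rightarrow> real \<Rightarrow> real \<Rightarrow> state \<Rightarrow> state \<Rightarrow> state" where
  "qstar_l g eta lam ql qr =
     (let hs = hstar_l g eta lam ql qr; us = ustar g eta lam ql qr;
          sx = sig_xx ql * (hh ql / hs)^2; sz = sig_zz ql * (hs / hh ql)^2 in
      (hs, hs * us, hs * sx, hs * sz))"

definition qstar_r :: "real \<Rightarrow> real \<Rightarrow> real \<Rightarrow> state \<Rightarrow> state \<Rightarrow> state" where
  "qstar_r g eta lam ql qr =
     (let hs = hstar_r g eta lam ql qr; us = ustar g eta lam ql qr;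
          sx = sig_xx qr * (hh qr / hs)^2; sz = sig_zz qr * (hs / hh qr)^2 in
      (hs, hs * us, hs * sx, hs * sz))"

definition Sigma1 :: "real \<Rightarrow> real \<Rightarrow> real \<Rightarrow> state \<Rightarrow> state \<Rightarrow> real" where
  "Sigma1 g eta lam ql qr = uu ql - c_l g eta lam ql qr / hh ql"
definition Sigma2 :: "real \<Rightarrow> real \<Rightarrow> real \<Rightarrow> state \<Rightarrow> state \<Rightarrow> real" where
  "Sigma2 g eta lam ql qr = ustar g eta lam ql qr"
definition Sigma3 :: "real \<Rightarrow> real \<Rightarrow> real \<Rightarrow> state \<Rightarrow> state \<Rightarrow> real" where
  "Sigma3 g eta lam ql qr = uu qr + c_r g eta lam ql qr / hh qr"

text \<open>Value of (state, pi) of the approximate solution R at xi = 0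
  (at a wave of speed exactly 0 both sides give the same fluxes).\<close>
definition R0 :: "real \<Rightarrow> real \<Rightarrow> real \<Rightarrow> state \<Rightarrow> state \<Rightarrow> state \<times> real" where
  "R0 g eta lam ql qr =
     (if 0 < Sigma1 g eta lam ql qr then (ql, Pres g eta lam ql)
      else if 0 < Sigma2 g eta lam ql qr then (qstar_l g eta lam ql qr, pistar g eta lam ql qr)
      else if 0 < Sigma3 g eta lam ql qr then (qstar_r g eta lam ql qr, pistar g eta lam ql qr)
      else (qr, Pres g eta lam qr))"

definition Flux_h :: "real \<Rightarrow> real \<Rightarrow> real \<Rightarrow> state \<Rightarrow> state \<Rightarrow> real" where
  "Flux_h g eta lam ql qr = (let (q, p) = R0 g eta lam ql qr in hh q * uu q)"

definition Flux_hu :: "real \<Rightarrow> real \<Rightarrow> real \<Rightarrow> state \<Rightarrow> state \<Rightarrow> real" where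
  "Flux_hu g eta lam ql qr = (let (q, p) = R0 g eta lam ql qr in hh q * (uu q)^2 + p)"

definition Flux_w_l :: "(state \<Rightarrow> real) \<Rightarrow> real \<Rightarrow> real \<Rightarrow> real \<Rightarrow> state \<Rightarrow> state \<Rightarrow> real" where
  "Flux_w_l w g eta lam ql qr =
     (let S1 = Sigma1 g eta lam ql qr; S2 = Sigma2 g eta lam ql qr; S3 = Sigma3 g eta lam ql qr;
          wl = w ql; wr = w qr; wls = w (qstar_l g eta lam ql qr); wrs = w (qstar_r g eta lam ql qr) in
      wl * uu ql + min 0 S1 * (wls - wl) + min 0 S2 * (wrs - wls) + min 0 S3 * (wr - wrs))"

definition Flux_w_r :: "(state \<Rightarrow> real) \<Rightarrow> real \<Rightarrow> real \<Rightarrow> real \<Rightarrow> state \<Rightarrow> state \<Rightarrow> real" where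
  "Flux_w_r w g eta lam ql qr =
     (let S1 = Sigma1 g eta lam ql qr; S2 = Sigma2 g eta lam ql qr; S3 = Sigma3 g eta lam ql qr;
          wl = w ql; wr = w qr; wls = w (qstar_l g eta lam ql qr); wrs = w (qstar_r g eta lam ql qr) in
      wr * uu qr - max 0 S1 * (wls - wl) - max 0 S2 * (wrs - wls) - max 0 S3 * (wr - wrs))"

definition w_xx :: "state \<Rightarrow> real" where "w_xx q = fst (snd (snd q))"
definition w_zz :: "state \<Rightarrow> real" where "w_zz q = snd (snd (snd q))"

definition Flux_l :: "real \<Rightarrow> real \<Rightarrow> real \<Rightarrow> state \<Rightarrow> state \<Rightarrow> state" where
  "Flux_l g eta lam ql qr =
     (Flux_h g eta lam ql qr, Flux_hu g eta lam ql qr,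
      Flux_w_l w_xx g eta lam ql qr, Flux_w_l w_zz g eta lam ql qr)"

definition Flux_r :: "real \<Rightarrow> real \<Rightarrow> real \<Rightarrow> state \<Rightarrow> state \<Rightarrow> state" where
  "Flux_r g eta lam ql qr =
     (Flux_h g eta lam ql qr, Flux_hu g eta lam ql qr,
      Flux_w_r w_xx g eta lam ql qr, Flux_w_r w_zz g eta lam ql qr)"

definition Amax :: "real \<Rightarrow> real \<Rightarrow> real \<Rightarrow> state \<Rightarrow> state \<Rightarrow> real" where
  "Amax g eta lam ql qr = max \<bar>Sigma1 g eta lam ql qr\<bar>
     (max \<bar>Sigma2 g eta lam ql qr\<bar> \<bar>Sigma3 g eta lam ql qr\<bar>)"

definition scheme_step :: "real \<Rightarrow> real \<Rightarrow> real \<Rightarrow> (int \<Rightarrow> real) \<Rightarrow> real \<Rightarrow> (int \<Rightarrow> state) \<Rightarrow> int \<Rightarrow> state" where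
  "scheme_step g eta lam dx dt qn i =
     (let (a0, a1, a2, a3) = qn i;
          (l0, l1, l2, l3) = Flux_l g eta lam (qn i) (qn (i + 1));
          (r0, r1, r2, r3) = Flux_r g eta lam (qn (i - 1)) (qn i);
          k = dt / dx i in
      (a0 - k * (l0 - r0), a1 - k * (l1 - r1), a2 - k * (l2 - r2), a3 - k * (l3 - r3)))"

definition Energy :: "real \<Rightarrow> real \<Rightarrow> real \<Rightarrow> state \<Rightarrow> real" where
  "Energy g eta lam q = hh q * (uu q)^2 / 2 + g * (hh q)^2 / 2
     + eta / (4 * lam) * hh q * (sig_xx q + sig_zz q - ln (sig_xx q * sig_zz q) - 2)"

definition Gflux :: "real \<Rightarrow> real \<Rightarrow> real \<Rightarrow> state \<Rightarrow> real" where
  "Gflux g eta lam q = (Energy g eta lam q + Pres g eta lam q) * uu q"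

end

theory Submission
  imports Defs
begin

text \<open>The relaxation speeds are chosen so that \<open>h\<^sub>l/h\<^sup>*\<^sub>l \<ge> 1/2\<close> and
  \<open>c\<^sub>l (h\<^sub>l/h\<^sup>*\<^sub>l)\<^sup>2 \<ge> h\<^sub>la\<^sub>l\<close>; since \<open>h\<^sup>2\<partial>\<^sub>hP\<close> grows at most like \<open>h\<^sup>4\<close> along
  the curve of constant \<open>s\<close>, this gives the subcharacteristic condition \<open>h\<^sup>2\<partial>\<^sub>hP \<le> c\<^sub>l\<^sup>2\<close>
  between \<open>h\<^sub>l\<close> and \<open>h\<^sup>*\<^sub>l\<close>, and symmetrically on the right.

  Across an outer wave of the solver with Lagrangian mass flux \<open>j\<close> (\<open>j = c\<^sub>l\<close> or \<open>j = -c\<^sub>r\<close>), the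
  energy balance equals \<open>j (1/h\<^sup>* - 1/h)\<^sup>2/2 \<cdot> (j\<^sup>2 - Q)\<close>, where \<open>Q\<close> is bounded by the largest value
  of \<open>h\<^sup>2\<partial>\<^sub>hP\<close> across the wave; by the subcharacteristic condition every wave dissipates energy,
  so the approximate Riemann solution satisfies an energy inequality.

  Under the CFL condition the update of a cell is a convex combination of the seven states of the
  two Riemann fans at its interfaces, and the energy is convex in the conservative variables, so
  Jensen's inequality combined with the Riemann energy inequality gives the discrete one.\<close>

definition state_of :: "real \<Rightarrow> real \<Rightarrow> real \<Rightarrow> real \<Rightarrow> state" where
  "state_of h u sx sz = (h, h * u, h * sx, h * sz)"

lemma state_of_simps [simp]:
  assumes "h \<noteq> 0"
  shows "hh (state_of h u sx sz) = h" "uu (state_of h u sx sz) = u"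
    "sig_xx (state_of h u sx sz) = sx" "sig_zz (state_of h u sx sz) = sz"
    "fst (state_of h u sx sz) = h" "fst (snd (state_of h u sx sz)) = h * u"
    "w_xx (state_of h u sx sz) = h * sx" "w_zz (state_of h u sx sz) = h * sz"
  using assms by (auto simp: state_of_def hh_def uu_def sig_xx_def sig_zz_def w_xx_def w_zz_def)

lemma admissible_state_of [simp]: "admissible (state_of h u sx sz) \<longleftrightarrow> 0 < h \<and> 0 < sx \<and> 0 < sz"
  by (cases "h = 0") (auto simp: admissible_def state_of_def hh_def sig_xx_def sig_zz_def)

lemma state_of_components:
  assumes "hh q \<noteq> 0"
  shows "state_of (hh q) (uu q) (sig_xx q) (sig_zz q) = q"
  using assms by (cases q) (simp add: state_of_def hh_def uu_def sig_xx_def sig_zz_def)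

lemma admissible_pos:
  assumes "admissible q"
  shows "0 < hh q" "0 < sig_xx q" "0 < sig_zz q"
  using assms by (auto simp: admissible_def)

lemma admissible_iff_conserved: "admissible q \<longleftrightarrow> 0 < hh q \<and> 0 < w_xx q \<and> 0 < w_zz q"
  by (cases q) (auto simp: admissible_def hh_def sig_xx_def sig_zz_def w_xx_def w_zz_def
      zero_less_divide_iff)

definition momentum :: "state \<Rightarrow> real" where
  "momentum q = fst (snd q)"

lemma momentum_eq: "hh q \<noteq> 0 \<Longrightarrow> momentum q = hh q * uu q"
  by (simp add: momentum_def hh_def uu_def)

lemma Energy_state_of:
  "h \<noteq> 0 \<Longrightarrow> Energy g eta lam (state_of h u sx sz)
     = h * u^2 / 2 + g * h^2 / 2 + eta / (4 * lam) * h * (sx + sz - ln (sx * sz) - 2)"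
  by (simp add: Energy_def)

lemma Pres_state_of:
  "h \<noteq> 0 \<Longrightarrow> Pres g eta lam (state_of h u sx sz) = g * h^2 / 2 + 2 * (eta / (4 * lam)) * h * (sz - sx)"
  by (simp add: Pres_def)

lemma between_pos: "0 < a \<Longrightarrow> 0 < b \<Longrightarrow> h \<in> between a b \<Longrightarrow> 0 < h"
  by (auto simp: between_def)

text \<open>Abstract form of the relaxation speed \<open>c\<^sub>l\<close>: here \<open>a = h\<^sub>la\<^sub>l\<close>, \<open>b = h\<^sub>ra\<^sub>r\<close>,
  \<open>X\<close> and \<open>Y\<close> are the velocity and pressure terms, and \<open>1 - hl N/(cl (cl + cr))\<close> is \<open>h\<^sub>l/h\<^sup>*\<^sub>l\<close>.\<close>
lemma relaxation_speed_bounds: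
  fixes a b hl X Y cl cr N :: real
  assumes a: "0 < a" and b: "0 < b" and hl: "0 < hl" and X: "0 \<le> X" and Y: "0 \<le> Y"
    and cl: "cl = a + 2 * hl * (X + Y / (a + b))" and cr: "b \<le> cr" and N: "N \<le> cr * X + Y"
  shows "a \<le> cl" "1/2 \<le> 1 - hl * N / (cl * (cl + cr))" "a \<le> cl * (1 - hl * N / (cl * (cl + cr)))^2"
proof -
  define W where "W = X + Y / (a + b)"
  have W: "0 \<le> W"
    using X Y a b by (simp add: W_def)
  show cla: "a \<le> cl"
    using cl hl W by (simp add: W_def)
  have clp: "0 < cl" and s: "a + b \<le> cl + cr"
    using cla cr a by auto
  have "Y \<le> Y / (a + b) * (cl + cr)"
    using mult_left_mono[OF s, of "Y / (a + b)"] Y a b by simp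
  moreover have "cr * X \<le> (cl + cr) * X"
    using clp X by (intro mult_right_mono) auto
  ultimately have NW: "N \<le> W * (cl + cr)"
    using N by (simp add: W_def algebra_simps)
  have "hl * N / (cl * (cl + cr)) \<le> hl * (W * (cl + cr)) / (cl * (cl + cr))"
    using NW hl clp s a b by (intro divide_right_mono mult_left_mono) auto
  also have "\<dots> = hl * W / cl"
    using clp s a b by simp
  also have "\<dots> = 1 - (cl + a) / (2 * cl)"
    using clp cl by (simp add: W_def[symmetric] field_simps)
  finally have t: "(cl + a) / (2 * cl) \<le> 1 - hl * N / (cl * (cl + cr))"
    by simp
  moreover have "1/2 \<le> (cl + a) / (2 * cl)"
    using clp a by (simp add: field_simps)
  ultimately show "1/2 \<le> 1 - hl * N / (cl * (cl + cr))"
    by linarith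
  have "a \<le> (cl + a)^2 / (4 * cl)"
    using clp sum_squares_ge_zero[of "cl - a" 0]
    by (simp add: pos_le_divide_eq power2_eq_square algebra_simps)
  also have "\<dots> = cl * ((cl + a) / (2 * cl))^2"
    using clp by (simp add: power2_eq_square field_simps)
  also have "\<dots> \<le> cl * (1 - hl * N / (cl * (cl + cr)))^2"
    using t clp a by (intro mult_left_mono power_mono) auto
  finally show "a \<le> cl * (1 - hl * N / (cl * (cl + cr)))^2" .
qed

lemma lagrangian_wave_energy_jump:
  fixes h h' u j e e' p :: real
  assumes h: "h \<noteq> 0" and h': "h' \<noteq> 0"
  defines "d \<equiv> 1 / h' - 1 / h"
  defines "u' \<equiv> u + j * d"
  shows "(u - j / h) * (h' * (u'^2 / 2 + e') - h * (u^2 / 2 + e))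
      - ((h' * (u'^2 / 2 + e') + (p - j^2 * d)) * u' - (h * (u^2 / 2 + e) + p) * u)
    = j * (j^2 * d^2 / 2 - (e' - e + p * d))"
proof -
  have mass: "h * (u - (u - j / h)) = j" "h' * (u' - (u - j / h)) = j"
    using h h' by (simp_all add: u'_def d_def field_simps)
  have "S * (h' * (u'^2 / 2 + e') - h * (u^2 / 2 + e)) - (h' * (u'^2 / 2 + e') * u' - h * (u^2 / 2 + e) * u)
    = h * (u - S) * (u^2 / 2 + e) - h' * (u' - S) * (u'^2 / 2 + e')" for S
    by (simp add: field_simps)
  from this[of "u - j / h", unfolded mass]
  have "(u - j / h) * (h' * (u'^2 / 2 + e') - h * (u^2 / 2 + e))
      - ((h' * (u'^2 / 2 + e') + (p - j^2 * d)) * u' - (h * (u^2 / 2 + e) + p) * u)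
    = j * ((u^2 / 2 + e) - (u'^2 / 2 + e')) - (p - j^2 * d) * u' + p * u"
    by (simp add: algebra_simps)
  also have "\<dots> = j * (j^2 * d^2 / 2 - (e' - e + p * d))"
    by (simp add: u'_def field_simps power2_eq_square power3_eq_cube)
  finally show ?thesis .
qed

lemma internal_energy_jump:
  fixes g k h0 h1 sx sz L :: real
  assumes "0 < h0" "0 < h1"
  defines "d \<equiv> 1 / h1 - 1 / h0"
  shows "(g * h1 / 2 + k * (sx * h0^2 / h1^2 + sz * h1^2 / h0^2 - L - 2)) - (g * h0 / 2 + k * (sx + sz - L - 2))
      + (g * h0^2 / 2 + 2 * k * h0 * (sz - sx)) * d
    = d^2 / 2 * (g * h0^2 * h1 + 2 * k * (sx * h0^2 + sz * (h1^2 + 2 * h0 * h1)))"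
  using assms by (simp add: d_def field_simps power2_eq_square)

lemma rankine_hugoniot_jump:
  fixes h u h' u' S j p p' :: real
  assumes "h * (u - S) = j" "h' * (u' - S) = j" "p' = p - j * (u' - u)"
  shows "h * u + S * (h' - h) = h' * u'"
    and "(h * u^2 + p) + S * (h' * u' - h * u) = h' * u'^2 + p'"
proof -
  show "h * u + S * (h' - h) = h' * u'"
    using assms(1,2) by (simp add: algebra_simps)
  have "h' * u'^2 - S * (h' * u') = u' * (h' * (u' - S))" "h * u^2 - S * (h * u) = u * (h * (u - S))"
    by (simp_all add: algebra_simps power2_eq_square)
  then have "h' * u'^2 - S * (h' * u') = j * u'" "h * u^2 - S * (h * u) = j * u"
    using assms(1,2) by simp_all
  then show "(h * u^2 + p) + S * (h' * u' - h * u) = h' * u'^2 + p'"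
    using assms(3) by (simp add: algebra_simps)
qed

lemma upwind_value_eq_fluctuations:
  fixes S1 S2 S3 f0 f1 f2 f3 F0 F1 F2 F3 :: real
  assumes "S1 < S2" "S2 < S3"
    and "f0 + S1 * (F1 - F0) = f1" "f1 + S2 * (F2 - F1) = f2" "f2 + S3 * (F3 - F2) = f3"
  shows "(if 0 < S1 then f0 else if 0 < S2 then f1 else if 0 < S3 then f2 else f3)
      = f0 + min 0 S1 * (F1 - F0) + min 0 S2 * (F2 - F1) + min 0 S3 * (F3 - F2)"
    and "(if 0 < S1 then f0 else if 0 < S2 then f1 else if 0 < S3 then f2 else f3)
      = f3 - max 0 S1 * (F1 - F0) - max 0 S2 * (F2 - F1) - max 0 S3 * (F3 - F2)"
  using assms by (auto simp: min_def max_def algebra_simps)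

lemma kinetic_above_tangent:
  fixes h h' u u' :: real
  assumes "0 \<le> h'"
  shows "h * u^2 / 2 - u^2 / 2 * (h' - h) + u * (h' * u' - h * u) \<le> h' * u'^2 / 2"
proof -
  have "h' * u'^2 / 2 - (h * u^2 / 2 - u^2 / 2 * (h' - h) + u * (h' * u' - h * u)) = h' * (u' - u)^2 / 2"
    by (simp add: field_simps power2_eq_square)
  moreover have "0 \<le> h' * (u' - u)^2 / 2"
    using assms by simp
  ultimately show ?thesis
    by linarith
qed

lemma potential_above_tangent:
  fixes g h h' :: real
  assumes "0 \<le> g"
  shows "g * h^2 / 2 + g * h * (h' - h) \<le> g * h'^2 / 2"
proof -
  have "g * h'^2 / 2 - (g * h^2 / 2 + g * h * (h' - h)) = g * (h' - h)^2 / 2"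
    by (simp add: field_simps power2_eq_square)
  moreover have "0 \<le> g * (h' - h)^2 / 2"
    using assms by simp
  ultimately show ?thesis
    by linarith
qed

lemma log_perspective_above_tangent:
  fixes h h' s s' :: real
  assumes "0 \<le> h'" "0 < s" "0 < s'"
  shows "h * (s - ln s - 1) - ln s * (h' - h) + (1 - 1 / s) * (h' * s' - h * s) \<le> h' * (s' - ln s' - 1)"
proof -
  have "h' * (s' - ln s' - 1) - (h * (s - ln s - 1) - ln s * (h' - h) + (1 - 1 / s) * (h' * s' - h * s))
      = h' * (s' / s - 1 - ln (s' / s))"
    using assms(2,3) by (simp add: ln_div field_simps)
  moreover have "0 \<le> h' * (s' / s - 1 - ln (s' / s))"
    using ln_le_minus_one[of "s' / s"] assms by (intro mult_nonneg_nonneg) simp_all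
  ultimately show ?thesis
    by linarith
qed

lemma convex_combination_pos:
  fixes w a :: "'i \<Rightarrow> real"
  assumes "finite I" "\<forall>j\<in>I. 0 \<le> w j" "sum w I = 1" "\<forall>j\<in>I. 0 < a j"
  shows "0 < (\<Sum>j\<in>I. w j * a j)"
proof -
  obtain i where "i \<in> I" "0 < w i"
    using assms(2,3) sum_nonpos[of I w] by (metis less_eq_real_def not_le zero_less_one)
  then show ?thesis
    using assms by (intro sum_pos2[where i = i]) (auto intro: mult_nonneg_nonneg less_imp_le)
qed

section \<open>Fluctuations and the scheme\<close>

definition fluct_l :: "(state \<Rightarrow> real) \<Rightarrow> real \<Rightarrow> real \<Rightarrow> real \<Rightarrow> state \<Rightarrow> state \<Rightarrow> real" where
  "fluct_l F g eta lam ql qr =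
     min 0 (Sigma1 g eta lam ql qr) * (F (qstar_l g eta lam ql qr) - F ql)
     + min 0 (Sigma2 g eta lam ql qr) * (F (qstar_r g eta lam ql qr) - F (qstar_l g eta lam ql qr))
     + min 0 (Sigma3 g eta lam ql qr) * (F qr - F (qstar_r g eta lam ql qr))"

definition fluct_r :: "(state \<Rightarrow> real) \<Rightarrow> real \<Rightarrow> real \<Rightarrow> real \<Rightarrow> state \<Rightarrow> state \<Rightarrow> real" where
  "fluct_r F g eta lam ql qr =
     max 0 (Sigma1 g eta lam ql qr) * (F (qstar_l g eta lam ql qr) - F ql)
     + max 0 (Sigma2 g eta lam ql qr) * (F (qstar_r g eta lam ql qr) - F (qstar_l g eta lam ql qr))
     + max 0 (Sigma3 g eta lam ql qr) * (F qr - F (qstar_r g eta lam ql qr))"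

lemma fluct_l_plus_fluct_r:
  "fluct_l F g eta lam ql qr + fluct_r F g eta lam ql qr =
     Sigma1 g eta lam ql qr * (F (qstar_l g eta lam ql qr) - F ql)
     + Sigma2 g eta lam ql qr * (F (qstar_r g eta lam ql qr) - F (qstar_l g eta lam ql qr))
     + Sigma3 g eta lam ql qr * (F qr - F (qstar_r g eta lam ql qr))"
  by (simp add: fluct_l_def fluct_r_def min_def max_def algebra_simps)

text \<open>The numerical energy flux \<open>\<G>\<close>: the left flux \<open>\<F>\<^sub>l\<close> of the scheme, with the energy in place
  of a conserved component.\<close>
definition num_energy_flux :: "real \<Rightarrow> real \<Rightarrow> real \<Rightarrow> state \<Rightarrow> state \<Rightarrow> real" where
  "num_energy_flux g eta lam ql qr = Gflux g eta lam ql + fluct_l (Energy g eta lam) g eta lam ql qr"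

lemma scheme_step_unfold:
  "scheme_step g eta lam dx dt qn i =
    (fst (qn i) - dt / dx i * (fst (Flux_l g eta lam (qn i) (qn (i + 1))) - fst (Flux_r g eta lam (qn (i - 1)) (qn i))),
     fst (snd (qn i)) - dt / dx i * (fst (snd (Flux_l g eta lam (qn i) (qn (i + 1))))
       - fst (snd (Flux_r g eta lam (qn (i - 1)) (qn i)))),
     fst (snd (snd (qn i))) - dt / dx i * (fst (snd (snd (Flux_l g eta lam (qn i) (qn (i + 1)))))
       - fst (snd (snd (Flux_r g eta lam (qn (i - 1)) (qn i))))),
     snd (snd (snd (qn i))) - dt / dx i * (snd (snd (snd (Flux_l g eta lam (qn i) (qn (i + 1)))))
       - snd (snd (snd (Flux_r g eta lam (qn (i - 1)) (qn i))))))"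
  by (simp add: scheme_step_def Let_def split: prod.split)

definition scheme_states :: "real \<Rightarrow> real \<Rightarrow> real \<Rightarrow> state \<Rightarrow> state \<Rightarrow> state \<Rightarrow> nat \<Rightarrow> state" where
  "scheme_states g eta lam qm q qp j =
     [q, qstar_l g eta lam q qp, qstar_r g eta lam q qp, qp,
      qm, qstar_l g eta lam qm q, qstar_r g eta lam qm q] ! j"

definition scheme_weights :: "real \<Rightarrow> real \<Rightarrow> real \<Rightarrow> real \<Rightarrow> state \<Rightarrow> state \<Rightarrow> state \<Rightarrow> nat \<Rightarrow> real" where
  "scheme_weights g eta lam t qm q qp j =
     [1 + t * min 0 (Sigma1 g eta lam q qp) - t * max 0 (Sigma3 g eta lam qm q),
      t * (min 0 (Sigma2 g eta lam q qp) - min 0 (Sigma1 g eta lam q qp)),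
      t * (min 0 (Sigma3 g eta lam q qp) - min 0 (Sigma2 g eta lam q qp)),
      - t * min 0 (Sigma3 g eta lam q qp),
      t * max 0 (Sigma1 g eta lam qm q),
      t * (max 0 (Sigma2 g eta lam qm q) - max 0 (Sigma1 g eta lam qm q)),
      t * (max 0 (Sigma3 g eta lam qm q) - max 0 (Sigma2 g eta lam qm q))] ! j"

lemma scheme_weights_average:
  "(\<Sum>j<7. scheme_weights g eta lam t qm q qp j * F (scheme_states g eta lam qm q qp j))
     = F q - t * (fluct_l F g eta lam q qp + fluct_r F g eta lam qm q)"
  by (simp add: numeral_eq_Suc scheme_weights_def scheme_states_def fluct_l_def fluct_r_def algebra_simps)

lemma sum_scheme_weights: "(\<Sum>j<7. scheme_weights g eta lam t qm q qp j) = 1"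
  using scheme_weights_average[where F = "\<lambda>_. 1"] by (simp add: fluct_l_def fluct_r_def)

section \<open>Sound speed, waves and convexity of the energy\<close>

locale viscoelastic =
  fixes g eta lam :: real
  assumes g_pos: "0 < g" and eta_pos: "0 < eta" and lam_pos: "0 < lam"
begin

abbreviation "E \<equiv> Energy g eta lam"
abbreviation "P \<equiv> Pres g eta lam"
abbreviation "G \<equiv> Gflux g eta lam"
abbreviation "a \<equiv> a_of g eta lam"

text \<open>The squared Lagrangian sound speed \<open>h\<^sup>2 \<partial>\<^sub>hP\<close> along the curve of constant \<open>s\<close> through \<open>q\<close>,
  as a function of \<open>h\<close>.\<close>
definition lag_sound_sq :: "state \<Rightarrow> real \<Rightarrow> real" where
  "lag_sound_sq q h = g * h^3 + eta / (2 * lam) * (3 * h^4 * sig_zz q / (hh q)^2 + sig_xx q * (hh q)^2)"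

lemma h2_dPdh_eq:
  assumes "admissible q" "h \<noteq> 0"
  shows "h^2 * dPdh g eta lam h (s_xx q) (s_zz q) = lag_sound_sq q h"
proof -
  note pos = admissible_pos[OF assms(1)]
  have "(s_zz q)^2 = sig_zz q / (hh q)^2"
    using pos by (simp add: s_zz_def power_divide)
  moreover have "1 / (s_xx q)^2 = sig_xx q * (hh q)^2"
    using pos by (simp add: s_xx_def power_mult_distrib power_divide)
  moreover have "h^2 * dPdh g eta lam h (s_xx q) (s_zz q)
      = g * h^3 + eta / (2 * lam) * (3 * h^4 * (s_zz q)^2 + 1 / (s_xx q)^2)"
    using assms(2) by (simp add: dPdh_def field_simps power2_eq_square power3_eq_cube power4_eq_xxxx)
  ultimately show ?thesis
    by (simp add: lag_sound_sq_def)
qed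

lemma lag_sound_sq_pos:
  assumes "admissible q" "0 < h"
  shows "0 < lag_sound_sq q h"
  using admissible_pos[OF assms(1)] assms(2) g_pos eta_pos lam_pos
  by (simp add: lag_sound_sq_def add_pos_pos)

lemma a_pos:
  assumes "admissible q"
  shows "0 < a q"
proof -
  note h = admissible_pos(1)[OF assms]
  have "0 < (hh q)^2 * dPdh g eta lam (hh q) (s_xx q) (s_zz q)"
    using h2_dPdh_eq[OF assms] lag_sound_sq_pos[OF assms h] h by simp
  then show ?thesis
    using h by (simp add: a_of_def zero_less_mult_iff)
qed

lemma lag_sound_sq_hh:
  assumes "admissible q"
  shows "lag_sound_sq q (hh q) = (hh q * a q)^2"
proof -
  note h = admissible_pos(1)[OF assms]
  have "0 \<le> dPdh g eta lam (hh q) (s_xx q) (s_zz q)"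
    using a_pos[OF assms] by (simp add: a_of_def)
  then show ?thesis
    using h2_dPdh_eq[OF assms, of "hh q"] h by (simp add: a_of_def power_mult_distrib)
qed

lemma lag_sound_sq_mono:
  assumes "admissible q" "0 < h" "h \<le> h'"
  shows "lag_sound_sq q h \<le> lag_sound_sq q h'"
proof -
  note pos = admissible_pos[OF assms(1)]
  have "h^3 \<le> h'^3" "h^4 \<le> h'^4"
    using assms by (auto intro: power_mono)
  then have "3 * h^4 * sig_zz q / (hh q)^2 \<le> 3 * h'^4 * sig_zz q / (hh q)^2"
    using pos by (auto intro!: divide_right_mono mult_right_mono)
  then show ?thesis
    unfolding lag_sound_sq_def using \<open>h^3 \<le> h'^3\<close> pos g_pos eta_pos lam_pos
    by (intro add_mono mult_left_mono) auto
qed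

lemma lag_sound_sq_scale:
  assumes "admissible q" "1 \<le> M" "0 < h" "h \<le> M * hh q"
  shows "lag_sound_sq q h \<le> M^4 * lag_sound_sq q (hh q)"
proof -
  note pos = admissible_pos[OF assms(1)]
  have "lag_sound_sq q h \<le> lag_sound_sq q (M * hh q)"
    using lag_sound_sq_mono[OF assms(1,3,4)] .
  also have "\<dots> = g * M^3 * (hh q)^3 + eta / (2 * lam) * (M^4 * (3 * (hh q)^2 * sig_zz q) + sig_xx q * (hh q)^2)"
    using pos by (simp add: lag_sound_sq_def power_mult_distrib power2_eq_square power4_eq_xxxx)
  also have "\<dots> \<le> g * M^4 * (hh q)^3 + eta / (2 * lam) * (M^4 * (3 * (hh q)^2 * sig_zz q) + M^4 * (sig_xx q * (hh q)^2))"
  proof -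
    have "M^3 \<le> M^4" "1 \<le> M^4"
      using assms(2) by (auto intro: power_increasing one_le_power)
    then show ?thesis
      using pos g_pos eta_pos lam_pos
      by (intro add_mono mult_right_mono mult_left_mono) auto
  qed
  also have "\<dots> = M^4 * lag_sound_sq q (hh q)"
    using pos by (simp add: lag_sound_sq_def algebra_simps power2_eq_square power4_eq_xxxx)
  finally show ?thesis .
qed

lemma subcharacteristic:
  assumes "admissible q" and "hh q * a q \<le> c" and "0 < iv" and "hh q * a q \<le> c * (hh q * iv)^2"
    and "h \<in> between (hh q) (1 / iv)"
  shows "lag_sound_sq q h \<le> c^2"
proof -
  note h0 = admissible_pos(1)[OF assms(1)]
  define M where "M = max 1 (1 / (hh q * iv))"
  have M1: "1 \<le> M"
    unfolding M_def by simp
  have h: "0 < h"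
    using between_pos[OF h0 _ assms(5)] assms(3) by simp
  have "h \<le> max (hh q) (1 / iv)"
    using assms(5) by (simp add: between_def)
  also have "\<dots> \<le> M * hh q"
    using h0 assms(3) by (auto simp: M_def max_def field_simps)
  finally have hM: "h \<le> M * hh q" .
  have "M^2 * (hh q * a q) \<le> c"
  proof (cases "1 / (hh q * iv) \<le> 1")
    case True
    then show ?thesis using assms(2) by (simp add: M_def)
  next
    case False
    then have "M^2 * (hh q * a q) = hh q * a q / (hh q * iv)^2"
      by (simp add: M_def power_divide)
    also have "\<dots> \<le> c"
      using assms(4) h0 assms(3) by (simp add: divide_le_eq)
    finally show ?thesis .
  qed
  moreover have "0 \<le> M^2 * (hh q * a q)"
    using h0 a_pos[OF assms(1)] by simp
  ultimately have "(M^2 * (hh q * a q))^2 \<le> c^2"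
    by (rule power_mono)
  moreover have "lag_sound_sq q h \<le> (M^2 * (hh q * a q))^2"
    using lag_sound_sq_scale[OF assms(1) M1 h hM]
    by (simp add: lag_sound_sq_hh[OF assms(1)] power_mult_distrib power2_eq_square power4_eq_xxxx
        mult_ac)
  ultimately show ?thesis by linarith
qed

definition wave_coeff :: "state \<Rightarrow> real \<Rightarrow> real" where
  "wave_coeff q h1 = g * (hh q)^2 * h1 + eta / (2 * lam) * (sig_xx q * (hh q)^2 + sig_zz q * (h1^2 + 2 * hh q * h1))"

lemma wave_coeff_le:
  assumes "admissible q" "0 < h1"
  shows "wave_coeff q h1 \<le> lag_sound_sq q (max (hh q) h1)"
proof -
  define h0 m where "h0 = hh q" and "m = max (hh q) h1"
  note pos = admissible_pos[OF assms(1), folded h0_def]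
  have m: "h0 \<le> m" "h1 \<le> m"
    by (simp_all add: h0_def m_def)
  have "h0^2 * h1 \<le> m^2 * m"
    using m pos assms(2) by (intro mult_mono power_mono) auto
  then have kin: "g * h0^2 * h1 \<le> g * m^3"
    using g_pos by (simp add: power3_eq_cube power2_eq_square mult.assoc)
  have "h0^2 * h1^2 \<le> m^2 * m^2" "h0^3 * h1 \<le> m^3 * m"
    using m pos assms(2) by (intro mult_mono power_mono; simp)+
  then have "h0^2 * (h1^2 + 2 * h0 * h1) \<le> 3 * m^4"
    by (simp add: algebra_simps power2_eq_square power3_eq_cube power4_eq_xxxx)
  then have "sig_zz q * (h0^2 * (h1^2 + 2 * h0 * h1)) \<le> sig_zz q * (3 * m^4)"
    using pos by (intro mult_left_mono) auto
  then have "sig_zz q * (h1^2 + 2 * h0 * h1) \<le> 3 * m^4 * sig_zz q / h0^2"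
    using pos by (simp add: pos_le_divide_eq mult_ac)
  then have "eta / (2 * lam) * (sig_xx q * h0^2 + sig_zz q * (h1^2 + 2 * h0 * h1))
      \<le> eta / (2 * lam) * (3 * m^4 * sig_zz q / h0^2 + sig_xx q * h0^2)"
    using eta_pos lam_pos by (intro mult_left_mono) auto
  with kin have "wave_coeff q h1 \<le> lag_sound_sq q m"
    by (simp add: wave_coeff_def lag_sound_sq_def h0_def)
  then show ?thesis
    by (simp add: m_def)
qed

lemma wave_energy_identity:
  fixes j h1 :: real
  assumes "admissible q0" "0 < h1"
  defines "d \<equiv> 1 / h1 - 1 / hh q0"
  defines "u1 \<equiv> uu q0 + j * d"
  defines "q1 \<equiv> state_of h1 u1 (sig_xx q0 * (hh q0 / h1)^2) (sig_zz q0 * (h1 / hh q0)^2)"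
  shows "(uu q0 - j / hh q0) * (E q1 - E q0) - ((E q1 + (P q0 - j^2 * d)) * u1 - (E q0 + P q0) * uu q0)
    = j * d^2 / 2 * (j^2 - wave_coeff q0 h1)"
proof -
  define sx sz L k where "sx = sig_xx q0" and "sz = sig_zz q0"
    and "L = ln (sig_xx q0 * sig_zz q0)" and "k = eta / (4 * lam)"
  define e0 e1 where "e0 = g * hh q0 / 2 + k * (sx + sz - L - 2)"
    and "e1 = g * h1 / 2 + k * (sx * (hh q0)^2 / h1^2 + sz * h1^2 / (hh q0)^2 - L - 2)"
  have pos: "0 < hh q0" "0 < sx" "0 < sz"
    using admissible_pos[OF assms(1)] by (simp_all add: sx_def sz_def)
  have q0: "q0 = state_of (hh q0) (uu q0) sx sz"
    using state_of_components[of q0] pos by (simp add: sx_def sz_def)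
  have prod: "sig_xx q0 * (hh q0 / h1)^2 * (sig_zz q0 * (h1 / hh q0)^2) = sig_xx q0 * sig_zz q0"
    using pos assms(2) by (simp add: power_divide field_simps)
  have E1: "E q1 = h1 * (u1^2 / 2 + e1)"
    using assms(2) lam_pos unfolding q1_def Energy_state_of[OF less_imp_neq[OF assms(2), symmetric]] prod
    by (simp add: e1_def sx_def sz_def L_def k_def power_divide field_simps power2_eq_square)
  have E0: "E q0 = hh q0 * ((uu q0)^2 / 2 + e0)"
    using pos lam_pos
    by (subst q0) (simp add: Energy_state_of e0_def L_def sx_def sz_def k_def field_simps power2_eq_square)
  have P0: "P q0 = g * (hh q0)^2 / 2 + 2 * k * hh q0 * (sz - sx)"
    using pos by (subst q0) (simp add: Pres_state_of k_def)
  have coeff: "wave_coeff q0 h1 = g * (hh q0)^2 * h1 + 2 * k * (sx * (hh q0)^2 + sz * (h1^2 + 2 * hh q0 * h1))"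
    by (simp add: wave_coeff_def sx_def sz_def k_def)
  have internal: "e1 - e0 + P q0 * d = d^2 / 2 * wave_coeff q0 h1"
    using internal_energy_jump[OF pos(1) assms(2), of g k sx sz L]
    unfolding P0 coeff e0_def e1_def d_def by simp
  have "(uu q0 - j / hh q0) * (E q1 - E q0) - ((E q1 + (P q0 - j^2 * d)) * u1 - (E q0 + P q0) * uu q0)
      = j * (j^2 * d^2 / 2 - (e1 - e0 + P q0 * d))"
  proof -
    have "hh q0 \<noteq> 0" "h1 \<noteq> 0"
      using pos(1) assms(2) by auto
    from lagrangian_wave_energy_jump[OF this, where u = "uu q0" and j = j and e = e0 and e' = e1
        and p = "P q0", folded d_def, folded u1_def]
    show ?thesis
      unfolding E0 E1 .
  qed
  also have "\<dots> = j * d^2 / 2 * (j^2 - wave_coeff q0 h1)"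
    unfolding internal by (simp add: algebra_simps)
  finally show ?thesis .
qed

lemma wave_energy_dissipation:
  fixes j h1 :: real
  assumes "admissible q0" "0 < h1"
    and subchar: "\<And>h. h \<in> between (hh q0) h1 \<Longrightarrow> lag_sound_sq q0 h \<le> j^2"
  defines "d \<equiv> 1 / h1 - 1 / hh q0"
  defines "u1 \<equiv> uu q0 + j * d"
  defines "q1 \<equiv> state_of h1 u1 (sig_xx q0 * (hh q0 / h1)^2) (sig_zz q0 * (h1 / hh q0)^2)"
  shows "0 \<le> j * ((uu q0 - j / hh q0) * (E q1 - E q0) - ((E q1 + (P q0 - j^2 * d)) * u1 - (E q0 + P q0) * uu q0))"
proof -
  have "max (hh q0) h1 \<in> between (hh q0) h1"
    by (simp add: between_def)
  then have "wave_coeff q0 h1 \<le> j^2"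
    using wave_coeff_le[OF assms(1,2)] subchar by fastforce
  then have "0 \<le> j^2 * d^2 / 2 * (j^2 - wave_coeff q0 h1)"
    by simp
  then show ?thesis
    unfolding wave_energy_identity[OF assms(1,2), of j, folded d_def, folded u1_def, folded q1_def]
    by (simp add: power2_eq_square mult_ac)
qed

lemma Energy_split:
  assumes "admissible q"
  shows "E q = hh q * (uu q)^2 / 2 + g * (hh q)^2 / 2
    + eta / (4 * lam) * (hh q * (sig_xx q - ln (sig_xx q) - 1) + hh q * (sig_zz q - ln (sig_zz q) - 1))"
  using admissible_pos[OF assms] lam_pos by (simp add: Energy_def ln_mult field_simps)

text \<open>The coefficients are the partial derivatives of the energy with respect to the conservative
  variables \<open>(h, hu, h\<sigma>\<^sub>x\<^sub>x, h\<sigma>\<^sub>z\<^sub>z)\<close>: this is convexity.\<close>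
lemma Energy_above_tangent:
  assumes x: "admissible x" and y: "admissible y"
  shows "E x + (g * hh x - (uu x)^2 / 2 - eta / (4 * lam) * (ln (sig_xx x) + ln (sig_zz x))) * (hh y - hh x)
      + uu x * (momentum y - momentum x)
      + eta / (4 * lam) * (1 - 1 / sig_xx x) * (w_xx y - w_xx x)
      + eta / (4 * lam) * (1 - 1 / sig_zz x) * (w_zz y - w_zz x) \<le> E y"
proof -
  define k where "k = eta / (4 * lam)"
  have k: "0 \<le> k"
    using eta_pos lam_pos by (simp add: k_def)
  note px = admissible_pos[OF x] and py = admissible_pos[OF y]
  have comps: "momentum q = hh q * uu q" "w_xx q = hh q * sig_xx q" "w_zz q = hh q * sig_zz q"
    if "0 < hh q" for q
    using that momentum_eq[of q] by (simp_all add: w_xx_def w_zz_def sig_xx_def sig_zz_def hh_def)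
  define hx ux ax zx where "hx = hh x" and "ux = uu x" and "ax = sig_xx x" and "zx = sig_zz x"
  define hy uy ay zy where "hy = hh y" and "uy = uu y" and "ay = sig_xx y" and "zy = sig_zz y"
  have pos: "0 < hx" "0 < ax" "0 < zx" "0 < hy" "0 < ay" "0 < zy"
    using px py by (simp_all add: hx_def ax_def zx_def hy_def ay_def zy_def)
  have "0 \<le> hy * uy^2 / 2 - (hx * ux^2 / 2 - ux^2 / 2 * (hy - hx) + ux * (hy * uy - hx * ux))"
    using kinetic_above_tangent[of hy hx ux uy] pos by simp
  moreover have "0 \<le> g * hy^2 / 2 - (g * hx^2 / 2 + g * hx * (hy - hx))"
    using potential_above_tangent[of g hx hy] g_pos by simp
  moreover have "0 \<le> k * (hy * (ay - ln ay - 1) - (hx * (ax - ln ax - 1) - ln ax * (hy - hx)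
      + (1 - 1 / ax) * (hy * ay - hx * ax)))"
    and "0 \<le> k * (hy * (zy - ln zy - 1) - (hx * (zx - ln zx - 1) - ln zx * (hy - hx)
      + (1 - 1 / zx) * (hy * zy - hx * zx)))"
    using log_perspective_above_tangent[of hy ax ay hx] log_perspective_above_tangent[of hy zx zy hx]
      pos k by simp_all
  moreover have "E y - (E x + (g * hx - ux^2 / 2 - k * (ln ax + ln zx)) * (hy - hx)
      + ux * (hy * uy - hx * ux) + k * (1 - 1 / ax) * (hy * ay - hx * ax)
      + k * (1 - 1 / zx) * (hy * zy - hx * zx))
    = (hy * uy^2 / 2 - (hx * ux^2 / 2 - ux^2 / 2 * (hy - hx) + ux * (hy * uy - hx * ux)))
      + (g * hy^2 / 2 - (g * hx^2 / 2 + g * hx * (hy - hx)))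
      + k * (hy * (ay - ln ay - 1) - (hx * (ax - ln ax - 1) - ln ax * (hy - hx)
          + (1 - 1 / ax) * (hy * ay - hx * ax)))
      + k * (hy * (zy - ln zy - 1) - (hx * (zx - ln zx - 1) - ln zx * (hy - hx)
          + (1 - 1 / zx) * (hy * zy - hx * zx)))"
    unfolding Energy_split[OF x] Energy_split[OF y] k_def[symmetric] hx_def ux_def ax_def zx_def
      hy_def uy_def ay_def zy_def
    by (simp add: algebra_simps)
  ultimately show ?thesis
    unfolding comps[OF px(1)] comps[OF py(1)] k_def[symmetric] hx_def[symmetric] ux_def[symmetric]
      ax_def[symmetric] zx_def[symmetric] hy_def[symmetric] uy_def[symmetric] ay_def[symmetric]
      zy_def[symmetric]
    by linarith
qed

lemma Energy_jensen:
  fixes w :: "'i \<Rightarrow> real" and y :: "'i \<Rightarrow> state"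
  assumes "finite I" "\<forall>j\<in>I. 0 \<le> w j" "sum w I = 1"
    and "\<forall>j\<in>I. admissible (y j)" "admissible x"
    and average: "\<forall>F \<in> {hh, momentum, w_xx, w_zz}. (\<Sum>j\<in>I. w j * F (y j)) = F x"
  shows "E x \<le> (\<Sum>j\<in>I. w j * E (y j))"
proof -
  define b0 b1 b2 b3 where "b0 = g * hh x - (uu x)^2 / 2 - eta / (4 * lam) * (ln (sig_xx x) + ln (sig_zz x))"
    and "b1 = uu x" and "b2 = eta / (4 * lam) * (1 - 1 / sig_xx x)" and "b3 = eta / (4 * lam) * (1 - 1 / sig_zz x)"
  define T where "T q = E x + b0 * (hh q - hh x) + b1 * (momentum q - momentum x)
      + b2 * (w_xx q - w_xx x) + b3 * (w_zz q - w_zz x)" for q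
  have "(\<Sum>j\<in>I. w j * T (y j)) = E x * sum w I
      + b0 * ((\<Sum>j\<in>I. w j * hh (y j)) - hh x * sum w I)
      + b1 * ((\<Sum>j\<in>I. w j * momentum (y j)) - momentum x * sum w I)
      + b2 * ((\<Sum>j\<in>I. w j * w_xx (y j)) - w_xx x * sum w I)
      + b3 * ((\<Sum>j\<in>I. w j * w_zz (y j)) - w_zz x * sum w I)"
    by (simp add: T_def algebra_simps sum.distrib sum_subtractf sum_distrib_left sum_distrib_right)
  also have "\<dots> = E x"
    using average assms(3) by simp
  finally have "E x = (\<Sum>j\<in>I. w j * T (y j))" ..
  also have "\<dots> \<le> (\<Sum>j\<in>I. w j * E (y j))"
    using Energy_above_tangent[OF assms(5)] assms(2,4)
    by (intro sum_mono mult_left_mono) (auto simp: T_def b0_def b1_def b2_def b3_def)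
  finally show ?thesis .
qed

end

section \<open>The approximate Riemann solver\<close>

locale riemann_problem = viscoelastic +
  fixes ql qr :: state
  assumes adm_l: "admissible ql" and adm_r: "admissible qr"
begin

abbreviation "cl \<equiv> c_l g eta lam ql qr"
abbreviation "cr \<equiv> c_r g eta lam ql qr"
abbreviation "il \<equiv> inv_hstar_l g eta lam ql qr"
abbreviation "ir \<equiv> inv_hstar_r g eta lam ql qr"
abbreviation "us \<equiv> ustar g eta lam ql qr"
abbreviation "ps \<equiv> pistar g eta lam ql qr"
abbreviation "yl \<equiv> qstar_l g eta lam ql qr"
abbreviation "yr \<equiv> qstar_r g eta lam ql qr"
abbreviation "hsl \<equiv> hstar_l g eta lam ql qr"
abbreviation "hsr \<equiv> hstar_r g eta lam ql qr"
abbreviation "S1 \<equiv> Sigma1 g eta lam ql qr"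
abbreviation "S2 \<equiv> Sigma2 g eta lam ql qr"
abbreviation "S3 \<equiv> Sigma3 g eta lam ql qr"

lemma hh_inv_hstar:
  "hh ql * il = 1 - hh ql * (cr * (uu ql - uu qr) + P qr - P ql) / (cl * (cl + cr))"
  "hh qr * ir = 1 - hh qr * (cl * (uu ql - uu qr) + P ql - P qr) / (cr * (cr + cl))"
proof -
  have neg: "hh q * (1 / hh q + - M / D) = 1 - hh q * M / D" if "admissible q" for q and M D :: real
    using admissible_pos(1)[OF that] by (simp add: right_diff_distrib)
  have Nl: "cr * (uu qr - uu ql) + P ql - P qr = - (cr * (uu ql - uu qr) + P qr - P ql)"
    and Nr: "cl * (uu qr - uu ql) + P qr - P ql = - (cl * (uu ql - uu qr) + P ql - P qr)"
    by (simp_all add: algebra_simps)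
  show "hh ql * il = 1 - hh ql * (cr * (uu ql - uu qr) + P qr - P ql) / (cl * (cl + cr))"
    unfolding inv_hstar_l_def Let_def Nl by (rule neg[OF adm_l])
  show "hh qr * ir = 1 - hh qr * (cl * (uu ql - uu qr) + P ql - P qr) / (cr * (cr + cl))"
    unfolding inv_hstar_r_def Let_def Nr add.commute[of cl cr] by (rule neg[OF adm_r])
qed

lemma relaxation_speeds:
  shows "hh ql * a ql \<le> cl" "1/2 \<le> hh ql * il" "hh ql * a ql \<le> cl * (hh ql * il)^2"
    and "hh qr * a qr \<le> cr" "1/2 \<le> hh qr * ir" "hh qr * a qr \<le> cr * (hh qr * ir)^2"
proof -
  define X Yl Yr where "X = max 0 (uu ql - uu qr)"
    and "Yl = max 0 (P qr - P ql)" and "Yr = max 0 (P ql - P qr)"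
  have hl: "0 < hh ql" and hr: "0 < hh qr"
    using admissible_pos adm_l adm_r by auto
  have al: "0 < hh ql * a ql" and ar: "0 < hh qr * a qr"
    using hl hr a_pos adm_l adm_r by auto
  have X: "0 \<le> X" "uu ql - uu qr \<le> X" and Y: "0 \<le> Yl" "0 \<le> Yr"
    by (auto simp: X_def Yl_def Yr_def)
  have cl: "cl = hh ql * a ql + 2 * hh ql * (X + Yl / (hh ql * a ql + hh qr * a qr))"
    by (simp add: c_l_def X_def Yl_def algebra_simps)
  have cr: "cr = hh qr * a qr + 2 * hh qr * (X + Yr / (hh qr * a qr + hh ql * a ql))"
    by (simp add: c_r_def X_def Yr_def algebra_simps)
  have "0 \<le> X + Yl / (hh ql * a ql + hh qr * a qr)" "0 \<le> X + Yr / (hh qr * a qr + hh ql * a ql)"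
    using X Y al ar by auto
  then have cl_ge: "hh ql * a ql \<le> cl" and cr_ge: "hh qr * a qr \<le> cr"
    using cl cr hl hr by auto
  have "P qr - P ql \<le> Yl" "P ql - P qr \<le> Yr"
    by (simp_all add: Yl_def Yr_def)
  moreover have "cr * (uu ql - uu qr) \<le> cr * X" "cl * (uu ql - uu qr) \<le> cl * X"
    using X(2) cl_ge cr_ge al ar by (auto intro!: mult_left_mono)
  ultimately have Nl: "cr * (uu ql - uu qr) + P qr - P ql \<le> cr * X + Yl"
    and Nr: "cl * (uu ql - uu qr) + P ql - P qr \<le> cl * X + Yr"
    by auto
  note L = relaxation_speed_bounds[OF al ar hl X(1) Y(1) cl cr_ge Nl]
  note R = relaxation_speed_bounds[OF ar al hr X(1) Y(2) cr cl_ge Nr]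
  show "hh ql * a ql \<le> cl" "1/2 \<le> hh ql * il" "hh ql * a ql \<le> cl * (hh ql * il)^2"
    using L hh_inv_hstar(1) by simp_all
  show "hh qr * a qr \<le> cr" "1/2 \<le> hh qr * ir" "hh qr * a qr \<le> cr * (hh qr * ir)^2"
    using R hh_inv_hstar(2) by simp_all
qed

lemma cl_pos: "0 < cl" and cr_pos: "0 < cr"
  using relaxation_speeds(1,4) a_pos[OF adm_l] a_pos[OF adm_r]
    admissible_pos(1)[OF adm_l] admissible_pos(1)[OF adm_r]
  by (metis mult_pos_pos order_less_le_trans)+

lemma il_pos: "0 < il" and ir_pos: "0 < ir"
proof -
  have "0 < hh ql * il" "0 < hh qr * ir"
    using relaxation_speeds(2,5) by linarith+
  then show "0 < il" "0 < ir"
    using admissible_pos(1)[OF adm_l] admissible_pos(1)[OF adm_r] by (simp_all add: zero_less_mult_iff)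
qed

lemma subcharacteristic_l: "h \<in> between (hh ql) hsl \<Longrightarrow> lag_sound_sq ql h \<le> cl^2"
  using subcharacteristic[OF adm_l relaxation_speeds(1) il_pos relaxation_speeds(3)]
  by (simp add: hstar_l_def)

lemma subcharacteristic_r: "h \<in> between (hh qr) hsr \<Longrightarrow> lag_sound_sq qr h \<le> cr^2"
  using subcharacteristic[OF adm_r relaxation_speeds(4) ir_pos relaxation_speeds(6)]
  by (simp add: hstar_r_def)

lemma hstar_pos: "0 < hsl" "0 < hsr"
  using il_pos ir_pos by (simp_all add: hstar_l_def hstar_r_def)

lemma hstar_subcharacteristic:
  "0 < il \<and> 0 < ir
    \<and> (\<forall>h \<in> between (hh ql) hsl. h^2 * dPdh g eta lam h (s_xx ql) (s_zz ql) \<le> cl^2)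
    \<and> (\<forall>h \<in> between (hh qr) hsr. h^2 * dPdh g eta lam h (s_xx qr) (s_zz qr) \<le> cr^2)"
proof -
  have "h^2 * dPdh g eta lam h (s_xx q) (s_zz q) = lag_sound_sq q h"
    if "admissible q" "0 < hs" "h \<in> between (hh q) hs" for q h hs
    using h2_dPdh_eq[OF that(1)] between_pos[OF admissible_pos(1)[OF that(1)] that(2,3)] by simp
  then show ?thesis
    using il_pos ir_pos hstar_pos adm_l adm_r subcharacteristic_l subcharacteristic_r by simp
qed

lemma inv_hstar_jumps:
  "1 / hsl - 1 / hh ql = (cr * (uu qr - uu ql) + P ql - P qr) / (cl * (cl + cr))"
  "1 / hsr - 1 / hh qr = (cl * (uu qr - uu ql) + P qr - P ql) / (cr * (cl + cr))"
  by (simp_all add: hstar_l_def hstar_r_def inv_hstar_l_def inv_hstar_r_def Let_def)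

lemma ustar_jump_l: "us = uu ql + cl * (1 / hsl - 1 / hh ql)"
  and pistar_jump_l: "ps = P ql - cl^2 * (1 / hsl - 1 / hh ql)"
  and ustar_jump_r: "us = uu qr - cr * (1 / hsr - 1 / hh qr)"
  and pistar_jump_r: "ps = P qr - cr^2 * (1 / hsr - 1 / hh qr)"
proof -
  have nz: "cl \<noteq> 0" "cr \<noteq> 0" "cl + cr \<noteq> 0"
    using cl_pos cr_pos by auto
  have l: "cl * (1 / hsl - 1 / hh ql) = (cr * (uu qr - uu ql) + P ql - P qr) / (cl + cr)"
    and r: "cr * (1 / hsr - 1 / hh qr) = (cl * (uu qr - uu ql) + P qr - P ql) / (cl + cr)"
    unfolding inv_hstar_jumps using nz by simp_all
  have sq: "c^2 * x = c * (c * x)" for c x :: real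
    by (simp add: power2_eq_square)
  show "us = uu ql + cl * (1 / hsl - 1 / hh ql)" "us = uu qr - cr * (1 / hsr - 1 / hh qr)"
    unfolding l r using nz by (simp_all add: ustar_def Let_def field_simps)
  show "ps = P ql - cl^2 * (1 / hsl - 1 / hh ql)" "ps = P qr - cr^2 * (1 / hsr - 1 / hh qr)"
    unfolding sq l r using nz by (simp_all add: pistar_def Let_def field_simps)
qed

lemma qstar_l_state: "yl = state_of hsl us (sig_xx ql * (hh ql / hsl)^2) (sig_zz ql * (hsl / hh ql)^2)"
  by (simp add: qstar_l_def Let_def state_of_def)

lemma qstar_r_state: "yr = state_of hsr us (sig_xx qr * (hh qr / hsr)^2) (sig_zz qr * (hsr / hh qr)^2)"
  by (simp add: qstar_r_def Let_def state_of_def)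

lemma admissible_qstar: "admissible yl" "admissible yr"
  using hstar_pos admissible_pos[OF adm_l] admissible_pos[OF adm_r]
  by (simp_all add: qstar_l_state qstar_r_state)

lemma qstar_hh_uu: "hh yl = hsl" "uu yl = us" "hh yr = hsr" "uu yr = us"
  using hstar_pos by (simp_all add: qstar_l_state qstar_r_state)

lemma mass_fluxes:
  "hh ql * (uu ql - S1) = cl" "hsl * (us - S1) = cl"
  "hsl * (us - S2) = 0" "hsr * (us - S2) = 0"
  "hsr * (us - S3) = - cr" "hh qr * (uu qr - S3) = - cr"
proof -
  have "us - S1 = cl / hsl" "us - S3 = - cr / hsr"
    using ustar_jump_l ustar_jump_r by (simp_all add: Sigma1_def Sigma3_def algebra_simps)
  then show "hh ql * (uu ql - S1) = cl" "hsl * (us - S1) = cl"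
    "hsl * (us - S2) = 0" "hsr * (us - S2) = 0"
    "hsr * (us - S3) = - cr" "hh qr * (uu qr - S3) = - cr"
    using admissible_pos(1)[OF adm_l] admissible_pos(1)[OF adm_r] hstar_pos
    by (simp_all add: Sigma1_def Sigma2_def Sigma3_def)
qed

lemma Sigma_strict_mono: "S1 < S2" "S2 < S3"
proof -
  have "hsr * (S3 - us) = cr"
    using mass_fluxes(5) by (simp add: algebra_simps)
  then have "0 < hsl * (us - S1)" "0 < hsr * (S3 - us)"
    using mass_fluxes(2) cl_pos cr_pos by simp_all
  then show "S1 < S2" "S2 < S3"
    using hstar_pos by (simp_all add: Sigma2_def zero_less_mult_iff)
qed

lemma rankine_hugoniot:
  "hh ql * uu ql + S1 * (hsl - hh ql) = hsl * us"
  "(hh ql * (uu ql)^2 + P ql) + S1 * (hsl * us - hh ql * uu ql) = hsl * us^2 + ps"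
  "hsl * us + S2 * (hsr - hsl) = hsr * us"
  "(hsl * us^2 + ps) + S2 * (hsr * us - hsl * us) = hsr * us^2 + ps"
  "hsr * us + S3 * (hh qr - hsr) = hh qr * uu qr"
  "(hsr * us^2 + ps) + S3 * (hh qr * uu qr - hsr * us) = hh qr * (uu qr)^2 + P qr"
proof -
  have du: "us - uu ql = cl * (1 / hsl - 1 / hh ql)" "uu qr - us = cr * (1 / hsr - 1 / hh qr)"
    using ustar_jump_l ustar_jump_r by simp_all
  have "ps = P ql - cl * (us - uu ql)" "P qr = ps - - cr * (uu qr - us)"
    unfolding du using pistar_jump_l pistar_jump_r by (simp_all add: power2_eq_square mult.assoc)
  note l = rankine_hugoniot_jump[OF mass_fluxes(1,2) this(1)]
    and c = rankine_hugoniot_jump[OF mass_fluxes(3,4), of ps ps]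
    and r = rankine_hugoniot_jump[OF mass_fluxes(5,6) this(2)]
  show "hh ql * uu ql + S1 * (hsl - hh ql) = hsl * us"
    "(hh ql * (uu ql)^2 + P ql) + S1 * (hsl * us - hh ql * uu ql) = hsl * us^2 + ps"
    "hsl * us + S2 * (hsr - hsl) = hsr * us"
    "(hsl * us^2 + ps) + S2 * (hsr * us - hsl * us) = hsr * us^2 + ps"
    "hsr * us + S3 * (hh qr - hsr) = hh qr * uu qr"
    "(hsr * us^2 + ps) + S3 * (hh qr * uu qr - hsr * us) = hh qr * (uu qr)^2 + P qr"
    using l c r by simp_all
qed

lemma riemann_energy_inequality:
  "0 \<le> G ql - G qr + S1 * (E yl - E ql) + S2 * (E yr - E yl) + S3 * (E qr - E yr)"
proof -
  have "0 \<le> cl * (S1 * (E yl - E ql) - ((E yl + ps) * us - (E ql + P ql) * uu ql))"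
    using wave_energy_dissipation[OF adm_l hstar_pos(1) subcharacteristic_l]
    unfolding ustar_jump_l[symmetric] pistar_jump_l[symmetric] qstar_l_state[symmetric]
    by (simp add: Sigma1_def)
  then have left: "0 \<le> S1 * (E yl - E ql) - ((E yl + ps) * us - (E ql + P ql) * uu ql)"
    using cl_pos by (simp add: zero_le_mult_iff)
  have eqs: "uu qr + - cr * (1 / hsr - 1 / hh qr) = us" "P qr - (- cr)^2 * (1 / hsr - 1 / hh qr) = ps"
    "uu qr - - cr / hh qr = S3"
    using ustar_jump_r pistar_jump_r by (simp_all add: Sigma3_def)
  have "0 \<le> - cr * (S3 * (E yr - E qr) - ((E yr + ps) * us - (E qr + P qr) * uu qr))"
    using wave_energy_dissipation[OF adm_r hstar_pos(2), of "- cr"] subcharacteristic_r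
    unfolding eqs qstar_r_state[symmetric] by simp
  then have right: "S3 * (E yr - E qr) - ((E yr + ps) * us - (E qr + P qr) * uu qr) \<le> 0"
    using cr_pos by (simp add: mult_le_0_iff)
  show ?thesis
    using left right by (simp add: Gflux_def Sigma2_def algebra_simps)
qed

lemma mass_jumps:
  "hh ql * uu ql + S1 * (hh yl - hh ql) = hh yl * uu yl"
  "hh yl * uu yl + S2 * (hh yr - hh yl) = hh yr * uu yr"
  "hh yr * uu yr + S3 * (hh qr - hh yr) = hh qr * uu qr"
  using rankine_hugoniot(1,3,5) by (simp_all add: qstar_hh_uu)

lemma momentum_jumps:
  "(hh ql * (uu ql)^2 + P ql) + S1 * (momentum yl - momentum ql) = hh yl * (uu yl)^2 + ps"
  "(hh yl * (uu yl)^2 + ps) + S2 * (momentum yr - momentum yl) = hh yr * (uu yr)^2 + ps"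
  "(hh yr * (uu yr)^2 + ps) + S3 * (momentum qr - momentum yr) = hh qr * (uu qr)^2 + P qr"
proof -
  have "momentum q = hh q * uu q" if "admissible q" for q
    using momentum_eq admissible_pos(1)[OF that] by simp
  then show "(hh ql * (uu ql)^2 + P ql) + S1 * (momentum yl - momentum ql) = hh yl * (uu yl)^2 + ps"
    "(hh yl * (uu yl)^2 + ps) + S2 * (momentum yr - momentum yl) = hh yr * (uu yr)^2 + ps"
    "(hh yr * (uu yr)^2 + ps) + S3 * (momentum qr - momentum yr) = hh qr * (uu qr)^2 + P qr"
    using rankine_hugoniot(2,4,6) adm_l adm_r admissible_qstar by (simp_all add: qstar_hh_uu)
qed

lemma Flux_l_fluctuations:
  "fst (Flux_l g eta lam ql qr) = hh ql * uu ql + fluct_l hh g eta lam ql qr"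
  "fst (snd (Flux_l g eta lam ql qr)) = hh ql * (uu ql)^2 + P ql + fluct_l momentum g eta lam ql qr"
  "fst (snd (snd (Flux_l g eta lam ql qr))) = w_xx ql * uu ql + fluct_l w_xx g eta lam ql qr"
  "snd (snd (snd (Flux_l g eta lam ql qr))) = w_zz ql * uu ql + fluct_l w_zz g eta lam ql qr"
  and Flux_r_fluctuations:
  "fst (Flux_r g eta lam ql qr) = hh qr * uu qr - fluct_r hh g eta lam ql qr"
  "fst (snd (Flux_r g eta lam ql qr)) = hh qr * (uu qr)^2 + P qr - fluct_r momentum g eta lam ql qr"
  "fst (snd (snd (Flux_r g eta lam ql qr))) = w_xx qr * uu qr - fluct_r w_xx g eta lam ql qr"
  "snd (snd (snd (Flux_r g eta lam ql qr))) = w_zz qr * uu qr - fluct_r w_zz g eta lam ql qr"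
proof -
  have Fh: "Flux_h g eta lam ql qr = (if 0 < S1 then hh ql * uu ql else if 0 < S2 then hh yl * uu yl
      else if 0 < S3 then hh yr * uu yr else hh qr * uu qr)"
    by (simp add: Flux_h_def R0_def)
  have Fhu: "Flux_hu g eta lam ql qr = (if 0 < S1 then hh ql * (uu ql)^2 + P ql
      else if 0 < S2 then hh yl * (uu yl)^2 + ps
      else if 0 < S3 then hh yr * (uu yr)^2 + ps else hh qr * (uu qr)^2 + P qr)"
    by (simp add: Flux_hu_def R0_def)
  note mass = upwind_value_eq_fluctuations[OF Sigma_strict_mono mass_jumps]
    and mom = upwind_value_eq_fluctuations[OF Sigma_strict_mono momentum_jumps]
  show "fst (Flux_l g eta lam ql qr) = hh ql * uu ql + fluct_l hh g eta lam ql qr"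
    "fst (Flux_r g eta lam ql qr) = hh qr * uu qr - fluct_r hh g eta lam ql qr"
    using mass unfolding Flux_l_def Flux_r_def fluct_l_def fluct_r_def Fh by simp_all
  show "fst (snd (Flux_l g eta lam ql qr)) = hh ql * (uu ql)^2 + P ql + fluct_l momentum g eta lam ql qr"
    "fst (snd (Flux_r g eta lam ql qr)) = hh qr * (uu qr)^2 + P qr - fluct_r momentum g eta lam ql qr"
    using mom unfolding Flux_l_def Flux_r_def fluct_l_def fluct_r_def Fhu by simp_all
qed (simp_all add: Flux_l_def Flux_r_def Flux_w_l_def Flux_w_r_def fluct_l_def fluct_r_def Let_def)

lemma riemann_energy_fluctuations:
  "0 \<le> G ql - G qr + fluct_l E g eta lam ql qr + fluct_r E g eta lam ql qr"
  using riemann_energy_inequality by (simp add: fluct_l_plus_fluct_r algebra_simps)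

end

section \<open>Energy inequality of the scheme\<close>

context viscoelastic
begin

lemma riemann_problemI: "admissible ql \<Longrightarrow> admissible qr \<Longrightarrow> riemann_problem g eta lam ql qr"
  by (simp add: riemann_problem_def riemann_problem_axioms_def viscoelastic_axioms)

lemma qstar_diagonal:
  assumes "admissible q"
  shows "qstar_l g eta lam q q = q" "qstar_r g eta lam q q = q"
proof -
  interpret riemann_problem g eta lam q q
    using riemann_problemI[OF assms assms] .
  have "cl \<noteq> 0" "cl + cr \<noteq> 0"
    using cl_pos cr_pos by auto
  then have "hsl = hh q" "hsr = hh q" "us = uu q"
    by (simp_all add: hstar_l_def hstar_r_def inv_hstar_l_def inv_hstar_r_def ustar_def Let_def
        c_l_def c_r_def field_simps)
  then show "yl = q" "yr = q"
    using state_of_components[of q] admissible_pos[OF assms]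
    by (simp_all add: qstar_l_state qstar_r_state)
qed

lemma num_energy_flux_diagonal: "admissible q \<Longrightarrow> num_energy_flux g eta lam q q = G q"
  by (simp add: num_energy_flux_def fluct_l_def qstar_diagonal)

lemma scheme_step_components:
  assumes "admissible (qn (i - 1))" "admissible (qn i)" "admissible (qn (i + 1))"
  shows "\<forall>F \<in> {hh, momentum, w_xx, w_zz}. F (scheme_step g eta lam dx dt qn i)
    = F (qn i) - dt / dx i * (fluct_l F g eta lam (qn i) (qn (i + 1)) + fluct_r F g eta lam (qn (i - 1)) (qn i))"
proof -
  interpret L: riemann_problem g eta lam "qn (i - 1)" "qn i"
    using riemann_problemI assms by blast
  interpret R: riemann_problem g eta lam "qn i" "qn (i + 1)"
    using riemann_problemI assms by blast
  show ?thesis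
    unfolding scheme_step_unfold R.Flux_l_fluctuations L.Flux_r_fluctuations
    by (simp add: hh_def momentum_def w_xx_def w_zz_def algebra_simps)
qed

lemma scheme_states_admissible:
  assumes "admissible qm" "admissible q" "admissible qp" "j < 7"
  shows "admissible (scheme_states g eta lam qm q qp j)"
proof -
  interpret L: riemann_problem g eta lam qm q
    using riemann_problemI assms by blast
  interpret R: riemann_problem g eta lam q qp
    using riemann_problemI assms by blast
  have "j \<in> {0, 1, 2, 3, 4, 5, 6}"
    using assms(4) by auto
  then show ?thesis
    using assms L.admissible_qstar R.admissible_qstar by (auto simp: scheme_states_def)
qed

lemma scheme_weights_nonneg:
  assumes "admissible qm" "admissible q" "admissible qp" "0 \<le> t"
    and "t * \<bar>Sigma1 g eta lam q qp\<bar> \<le> 1/2" "t * \<bar>Sigma3 g eta lam qm q\<bar> \<le> 1/2" "j < 7"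
  shows "0 \<le> scheme_weights g eta lam t qm q qp j"
proof -
  interpret L: riemann_problem g eta lam qm q
    using riemann_problemI assms by blast
  interpret R: riemann_problem g eta lam q qp
    using riemann_problemI assms by blast
  have "- (1/2) \<le> t * min 0 (Sigma1 g eta lam q qp)" "t * max 0 (Sigma3 g eta lam qm q) \<le> 1/2"
    using assms(4-6) mult_left_mono[of "- min 0 (Sigma1 g eta lam q qp)" "\<bar>Sigma1 g eta lam q qp\<bar>" t]
      mult_left_mono[of "max 0 (Sigma3 g eta lam qm q)" "\<bar>Sigma3 g eta lam qm q\<bar>" t]
    by auto
  moreover have "j \<in> {0, 1, 2, 3, 4, 5, 6}"
    using assms(7) by auto
  ultimately show ?thesis
    using assms(4) L.Sigma_strict_mono R.Sigma_strict_mono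
    by (auto simp: scheme_weights_def intro!: mult_nonneg_nonneg simp: mult_le_0_iff)
qed

lemma cfl_wave_speeds:
  assumes "0 < dt" "0 < dx" "dt * Amax g eta lam ql qr \<le> dx / 2"
  shows "dt / dx * \<bar>Sigma1 g eta lam ql qr\<bar> \<le> 1/2" "dt / dx * \<bar>Sigma3 g eta lam ql qr\<bar> \<le> 1/2"
proof -
  have "\<bar>Sigma1 g eta lam ql qr\<bar> \<le> Amax g eta lam ql qr" "\<bar>Sigma3 g eta lam ql qr\<bar> \<le> Amax g eta lam ql qr"
    by (simp_all add: Amax_def)
  then have "dt * \<bar>Sigma1 g eta lam ql qr\<bar> \<le> dx / 2" "dt * \<bar>Sigma3 g eta lam ql qr\<bar> \<le> dx / 2"
    using assms(1,3) by (meson mult_left_mono less_imp_le order_trans)+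
  then show "dt / dx * \<bar>Sigma1 g eta lam ql qr\<bar> \<le> 1/2" "dt / dx * \<bar>Sigma3 g eta lam ql qr\<bar> \<le> 1/2"
    using assms(2) by (simp_all add: field_simps)
qed

lemma scheme_step_energy_le:
  assumes dx: "\<forall>i. 0 < dx i" and dt: "0 < dt" and adm: "\<forall>i. admissible (qn i)"
    and cfl: "\<forall>i. dt * Amax g eta lam (qn i) (qn (i + 1)) \<le> min (dx i) (dx (i + 1)) / 2"
  shows "E (scheme_step g eta lam dx dt qn i) \<le> E (qn i)
    - dt / dx i * (fluct_l E g eta lam (qn i) (qn (i + 1)) + fluct_r E g eta lam (qn (i - 1)) (qn i))"
proof -
  define qm q qp t x where "qm = qn (i - 1)" and "q = qn i" and "qp = qn (i + 1)"
    and "t = dt / dx i" and "x = scheme_step g eta lam dx dt qn i"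
  define w y where "w = scheme_weights g eta lam t qm q qp" and "y = scheme_states g eta lam qm q qp"
  have adm3: "admissible qm" "admissible q" "admissible qp"
    using adm by (simp_all add: qm_def q_def qp_def)
  have "t * \<bar>Sigma1 g eta lam q qp\<bar> \<le> 1/2"
    using cfl_wave_speeds(1)[OF dt dx[rule_format, of i], of q qp] cfl[rule_format, of i]
    by (simp add: t_def q_def qp_def)
  moreover have "t * \<bar>Sigma3 g eta lam qm q\<bar> \<le> 1/2"
    using cfl_wave_speeds(2)[OF dt dx[rule_format, of i], of qm q] cfl[rule_format, of "i - 1"]
    by (simp add: t_def qm_def q_def)
  moreover have "0 \<le> t"
    using dx[rule_format, of i] dt by (simp add: t_def)
  ultimately have w_nonneg: "\<forall>j\<in>{..<7}. 0 \<le> w j"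
    using scheme_weights_nonneg[OF adm3] by (simp add: w_def)
  have w_sum: "sum w {..<7} = 1"
    by (simp add: w_def sum_scheme_weights)
  have y_adm: "\<forall>j\<in>{..<7}. admissible (y j)"
    using scheme_states_admissible[OF adm3] by (simp add: y_def)
  have average: "\<forall>F \<in> {hh, momentum, w_xx, w_zz}. (\<Sum>j<7. w j * F (y j)) = F x"
    using scheme_step_components[of qn i] adm
    by (simp add: w_def y_def scheme_weights_average x_def qm_def q_def qp_def t_def)
  have avg_pos: "0 < (\<Sum>j<7. w j * F (y j))" if "\<forall>j\<in>{..<7}. 0 < F (y j)" for F
    using convex_combination_pos[OF _ w_nonneg w_sum that] by simp
  have "admissible x"
    using avg_pos[of hh] avg_pos[of w_xx] avg_pos[of w_zz] average y_adm
    by (simp add: admissible_iff_conserved)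
  have "E x \<le> (\<Sum>j<7. w j * E (y j))"
    using Energy_jensen[OF _ w_nonneg w_sum y_adm \<open>admissible x\<close> average] by simp
  also have "\<dots> = E q - t * (fluct_l E g eta lam q qp + fluct_r E g eta lam qm q)"
    by (simp add: w_def y_def scheme_weights_average)
  finally show ?thesis
    by (simp add: x_def qm_def q_def qp_def t_def)
qed

lemma scheme_energy_inequality:
  assumes dx: "\<forall>i. 0 < dx i" and dt: "0 < dt" and adm: "\<forall>i. admissible (qn i)"
    and cfl: "\<forall>i. dt * Amax g eta lam (qn i) (qn (i + 1)) \<le> min (dx i) (dx (i + 1)) / 2"
  shows "E (scheme_step g eta lam dx dt qn i) - E (qn i)
    + dt / dx i * (num_energy_flux g eta lam (qn i) (qn (i + 1)) - num_energy_flux g eta lam (qn (i - 1)) (qn i)) \<le> 0"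
proof -
  interpret riemann_problem g eta lam "qn (i - 1)" "qn i"
    using riemann_problemI adm by blast
  have "0 \<le> dt / dx i * (G (qn (i - 1)) - G (qn i)
      + fluct_l E g eta lam (qn (i - 1)) (qn i) + fluct_r E g eta lam (qn (i - 1)) (qn i))"
    using riemann_energy_fluctuations dx[rule_format, of i] dt by (intro mult_nonneg_nonneg) simp_all
  with scheme_step_energy_le[OF assms, of i] show ?thesis
    by (simp add: num_energy_flux_def algebra_simps)
qed

end

theorem lemma3:
  fixes g eta lam :: real
  assumes "g > 0" and "eta > 0" and "lam > 0"
  shows "(\<forall>ql qr. admissible ql \<and> admissible qr \<longrightarrow>
            inv_hstar_l g eta lam ql qr > 0 \<and> inv_hstar_r g eta lam ql qr > 0
          \<and> (\<forall>h \<in> between (hh ql) (hstar_l g eta lam ql qr).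
               h^2 * dPdh g eta lam h (s_xx ql) (s_zz ql) \<le> (c_l g eta lam ql qr)^2)
          \<and> (\<forall>h \<in> between (hh qr) (hstar_r g eta lam ql qr).
               h^2 * dPdh g eta lam h (s_xx qr) (s_zz qr) \<le> (c_r g eta lam ql qr)^2))
       \<and> (\<exists>GG :: state \<Rightarrow> state \<Rightarrow> real.
            (\<forall>q. admissible q \<longrightarrow> GG q q = Gflux g eta lam q)
          \<and> (\<forall>(dx :: int \<Rightarrow> real) (dt :: real) (qn :: int \<Rightarrow> state).
               (\<forall>i. dx i > 0) \<longrightarrow> dt > 0 \<longrightarrow> (\<forall>i. admissible (qn i)) \<longrightarrow>
               (\<forall>i. dt * Amax g eta lam (qn i) (qn (i + 1)) \<le> min (dx i) (dx (i + 1)) / 2) \<longrightarrow>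
               (\<forall>i. Energy g eta lam (scheme_step g eta lam dx dt qn i) - Energy g eta lam (qn i)
                    + dt / dx i * (GG (qn i) (qn (i + 1)) - GG (qn (i - 1)) (qn i)) \<le> 0)))"
proof -
  interpret viscoelastic g eta lam
    using assms by unfold_locales
  show ?thesis
    using riemann_problem.hstar_subcharacteristic[OF riemann_problemI]
      num_energy_flux_diagonal scheme_energy_inequality
    by (intro conjI allI impI exI[of _ "num_energy_flux g eta lam"]) auto
qed

end
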